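(* Let $Q$ be a polyhedral partially ordered abelian group and let $M$ be a downset-finite $Q$-module. Then $M$ admits a primary decomposition, i.e., there exist finitely many submodules $M_1,\dots,M_r\subseteq M$ such that each quotient $M/M_i$ is coprimary and the natural map $M\to\bigoplus_{i=1}^r M/M_i$ is injective.
   Context: A partially ordered abelian group is an abelian group $Q$ generated by a submonoid $Q_+$ (the positive cone) whose only unit is $0$; the order is $q\preceq q'$ iff $q'-q\in Q_+$. A face of $Q$ (or of $Q_+$) is a submonoid $\sigma\subseteq Q_+$ such that $Q_+\setminus\sigma$ is an ideal of the monoid $Q_+$ (i.e. $(Q_+\setminus\sigma)+Q_+\subseteq Q_+\setminus\sigma$). $Q$ is polyhedral if $Q_+$ has only finitely many faces. A $Q$-module is a $Q$-graded vector space $M=\bigoplus_{q\in Q}M_q$ over a field $k$ with linear maps $M_q\to M_{q'}$ for $q\preceq q'$, compatible with composition (identity for $q=q'$); equivalently a $Q$-graded module over the monoid algebra $k[Q_+]$. Homomorphisms are degree-preserving linear maps commuting with these structure maps. A downset $D\subseteq Q$ is a subset with $D-Q_+=D$; the downset module $k[D]$ has $k$ in each degree $q\in D$, $0$ elsewhere, identity structure maps between degrees in $D$ (it is a quotient of $k[Q]$). A downset hull of $M$ is an injection $M\hookrightarrow\bigoplus_{j\in J}E_j$ with each $E_j$ a downset module; $M$ is downset-finite if it admits such a hull with $J$ finite. For a face $\tau$, $\mathbb Z\tau$ is the subgroup generated by $\tau$, and the localization of $M$ along $\tau$ is $M_\tau=M\otimes_{k[Q_+]}k[Q_++\mathbb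 Z\tau]$, with natural map $M\to M_\tau$. The submodule of $M$ globally supported on $\tau$ is $\Gamma_\tau M=\bigcap_{\tau'\not\subseteq\tau}\ker(M\to M_{\tau'})$, the intersection over faces $\tau'$ not contained in $\tau$. A module $M$ (over polyhedral $Q$) is coprimary (more precisely $\tau$-coprimary) if for some face $\tau$ the map $M\to M_\tau$ is injective and $\Gamma_\tau(M_\tau)$ is an essential submodule of $M_\tau$ (every nonzero submodule of $M_\tau$ meets it nontrivially). *)

theory Defs
  imports "HOL-Algebra.Module"
begin

text \<open>A partially ordered abelian group is an abelian group (a type of class ab_group_add)
  together with its positive cone P: a submonoid generating the group whose only unit is 0.\<close>

definition pogroup :: "'q::ab_group_add set \<Rightarrow> bool" where
  "pogroup P \<longleftrightarrow> 0 \<in> P \<and> (\<forall>a\<in>P. \<forall>b\<in>P. a + b \<in> P)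
     \<and> (\<forall>q. \<exists>a\<in>P. \<exists>b\<in>P. q = a - b)
     \<and> (\<forall>a\<in>P. - a \<in> P \<longrightarrow> a = 0)"

definition qle :: "'q::ab_group_add set \<Rightarrow> 'q \<Rightarrow> 'q \<Rightarrow> bool" where
  "qle P q q' \<longleftrightarrow> q' - q \<in> P"

definition face :: "'q::ab_group_add set \<Rightarrow> 'q set \<Rightarrow> bool" where
  "face P \<sigma> \<longleftrightarrow> \<sigma> \<subseteq> P \<and> 0 \<in> \<sigma> \<and> (\<forall>a\<in>\<sigma>. \<forall>b\<in>\<sigma>. a + b \<in> \<sigma>)
     \<and> (\<forall>a\<in>P - \<sigma>. \<forall>b\<in>P. a + b \<in> P - \<sigma>)"

definition polyhedral :: "'q::ab_group_add set \<Rightarrow> bool" where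
  "polyhedral P \<longleftrightarrow> pogroup P \<and> finite {\<sigma>. face P \<sigma>}"

record ('q, 'a, 'v) qmod =
  space :: "'q \<Rightarrow> ('a, 'v) module"
  trans :: "'q \<Rightarrow> 'q \<Rightarrow> 'v \<Rightarrow> 'v"

definition linmap :: "('a, 'c) ring_scheme \<Rightarrow> ('a, 'v) module \<Rightarrow> ('a, 'w) module \<Rightarrow> ('v \<Rightarrow> 'w) \<Rightarrow> bool" where
  "linmap R V W f \<longleftrightarrow> f \<in> carrier V \<rightarrow> carrier W
     \<and> (\<forall>x\<in>carrier V. \<forall>y\<in>carrier V. f (add V x y) = add W (f x) (f y))
     \<and> (\<forall>a\<in>carrier R. \<forall>x\<in>carrier V. f (smult V a x) = smult W a (f x))"

definition qmodule :: "'q::ab_group_add set \<Rightarrow> ('a, 'c) ring_scheme \<Rightarrow> ('q, 'a, 'v) qmod \<Rightarrow> bool" where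
  "qmodule P R M \<longleftrightarrow> (\<forall>q. module R (space M q))
     \<and> (\<forall>q q'. qle P q q' \<longrightarrow> linmap R (space M q) (space M q') (trans M q q'))
     \<and> (\<forall>q. \<forall>m\<in>carrier (space M q). trans M q q m = m)
     \<and> (\<forall>q q' q'' m. qle P q q' \<and> qle P q' q'' \<and> m \<in> carrier (space M q)
          \<longrightarrow> trans M q' q'' (trans M q q' m) = trans M q q'' m)"

definition qhom :: "'q::ab_group_add set \<Rightarrow> ('a, 'c) ring_scheme \<Rightarrow> ('q, 'a, 'v) qmod
    \<Rightarrow> ('q, 'a, 'w) qmod \<Rightarrow> ('q \<Rightarrow> 'v \<Rightarrow> 'w) \<Rightarrow> bool" where
  "qhom P R M N \<phi> \<longleftrightarrow> (\<forall>q. linmap R (space M q) (space N q) (\<phi> q))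
     \<and> (\<forall>q q' m. qle P q q' \<and> m \<in> carrier (space M q)
          \<longrightarrow> \<phi> q' (trans M q q' m) = trans N q q' (\<phi> q m))"

definition qsubmodule :: "'q::ab_group_add set \<Rightarrow> ('a, 'c) ring_scheme \<Rightarrow> ('q, 'a, 'v) qmod
    \<Rightarrow> ('q \<Rightarrow> 'v set) \<Rightarrow> bool" where
  "qsubmodule P R M N \<longleftrightarrow> (\<forall>q. N q \<subseteq> carrier (space M q) \<and> submodule (N q) R (space M q))
     \<and> (\<forall>q q'. qle P q q' \<longrightarrow> trans M q q' ` N q \<subseteq> N q')"

definition qnonzero :: "('q, 'a, 'v) qmod \<Rightarrow> ('q \<Rightarrow> 'v set) \<Rightarrow> bool" where
  "qnonzero M N \<longleftrightarrow> (\<exists>q. \<exists>x\<in>N q. x \<noteq> zero (space M q))"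

definition essential :: "'q::ab_group_add set \<Rightarrow> ('a, 'c) ring_scheme \<Rightarrow> ('q, 'a, 'v) qmod
    \<Rightarrow> ('q \<Rightarrow> 'v set) \<Rightarrow> bool" where
  "essential P R M N \<longleftrightarrow> qsubmodule P R M N
     \<and> (\<forall>S. qsubmodule P R M S \<and> qnonzero M S \<longrightarrow> qnonzero M (\<lambda>q. S q \<inter> N q))"

definition qcls :: "('q, 'a, 'v) qmod \<Rightarrow> ('q \<Rightarrow> 'v set) \<Rightarrow> 'q \<Rightarrow> 'v \<Rightarrow> 'v set" where
  "qcls M N q m = (\<lambda>n. add (space M q) n m) ` N q"

definition quot :: "('q, 'a, 'v) qmod \<Rightarrow> ('q \<Rightarrow> 'v set) \<Rightarrow> ('q, 'a, 'v set) qmod" where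
  "quot M N = \<lparr> space = (\<lambda>q.
       \<lparr> carrier = qcls M N q ` carrier (space M q),
         mult = undefined, one = undefined,
         zero = qcls M N q (zero (space M q)),
         add = (\<lambda>x y. qcls M N q (add (space M q) (SOME m. m \<in> x) (SOME m. m \<in> y))),
         smult = (\<lambda>a x. qcls M N q (smult (space M q) a (SOME m. m \<in> x))) \<rparr>),
     trans = (\<lambda>q q' x. qcls M N q' (trans M q q' (SOME m. m \<in> x))) \<rparr>"

text \<open>M_tau = M tensor k[Q_+ + Z tau], realized degreewise as the direct limit:
  (M_tau)_q = colim over f in tau of M_(q+f).  An element is the class of a pair (f, m)
  with f in tau and m in M_(q+f) (thought of as m / x^f).\<close>

definition locpairs :: "('q::ab_group_add, 'a, 'v) qmod \<Rightarrow> 'q set \<Rightarrow> 'q \<Rightarrow> ('q \<times> 'v) set" where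
  "locpairs M \<tau> q = {(f, m). f \<in> \<tau> \<and> m \<in> carrier (space M (q + f))}"

definition loceq :: "('q::ab_group_add, 'a, 'v) qmod \<Rightarrow> 'q set \<Rightarrow> 'q \<Rightarrow> 'q \<times> 'v \<Rightarrow> 'q \<times> 'v \<Rightarrow> bool" where
  "loceq M \<tau> q x y \<longleftrightarrow> (\<exists>h\<in>\<tau>.
      trans M (q + fst x) (q + fst x + fst y + h) (snd x)
    = trans M (q + fst y) (q + fst x + fst y + h) (snd y))"

definition loccls :: "('q::ab_group_add, 'a, 'v) qmod \<Rightarrow> 'q set \<Rightarrow> 'q \<Rightarrow> 'q \<times> 'v \<Rightarrow> ('q \<times> 'v) set" where
  "loccls M \<tau> q x = {y \<in> locpairs M \<tau> q. loceq M \<tau> q x y}"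

definition loc :: "('q::ab_group_add, 'a, 'v) qmod \<Rightarrow> 'q set \<Rightarrow> ('q, 'a, ('q \<times> 'v) set) qmod" where
  "loc M \<tau> = \<lparr> space = (\<lambda>q.
       \<lparr> carrier = loccls M \<tau> q ` locpairs M \<tau> q,
         mult = undefined, one = undefined,
         zero = loccls M \<tau> q (0, zero (space M q)),
         add = (\<lambda>x y. let (f, m) = (SOME p. p \<in> x); (g, n) = (SOME p. p \<in> y) in
                 loccls M \<tau> q (f + g, add (space M (q + f + g))
                     (trans M (q + f) (q + f + g) m) (trans M (q + g) (q + f + g) n))),
         smult = (\<lambda>a x. let (f, m) = (SOME p. p \<in> x) in
                 loccls M \<tau> q (f, smult (space M (q + f)) a m)) \<rparr>),
     trans = (\<lambda>q q' x. let (f, m) = (SOME p. p \<in> x) in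
                 loccls M \<tau> q' (f, trans M (q + f) (q' + f) m)) \<rparr>"

definition locmap :: "('q::ab_group_add, 'a, 'v) qmod \<Rightarrow> 'q set \<Rightarrow> 'q \<Rightarrow> 'v \<Rightarrow> ('q \<times> 'v) set" where
  "locmap M \<tau> q m = loccls M \<tau> q (0, m)"

definition Gamma :: "'q::ab_group_add set \<Rightarrow> ('q, 'a, 'v) qmod \<Rightarrow> 'q set \<Rightarrow> 'q \<Rightarrow> 'v set" where
  "Gamma P M \<tau> q = {m \<in> carrier (space M q). \<forall>\<tau>'. face P \<tau>' \<and> \<not> \<tau>' \<subseteq> \<tau>
       \<longrightarrow> locmap M \<tau>' q m = zero (space (loc M \<tau>') q)}"

definition coprimary :: "'q::ab_group_add set \<Rightarrow> ('a, 'c) ring_scheme \<Rightarrow> ('q, 'a, 'v) qmod \<Rightarrow> bool" where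
  "coprimary P R M \<longleftrightarrow> (\<exists>\<tau>. face P \<tau>
     \<and> (\<forall>q. inj_on (locmap M \<tau> q) (carrier (space M q)))
     \<and> essential P R (loc M \<tau>) (Gamma P (loc M \<tau>) \<tau>))"

definition downset :: "'q::ab_group_add set \<Rightarrow> 'q set \<Rightarrow> bool" where
  "downset P D \<longleftrightarrow> {d - p | d p. d \<in> D \<and> p \<in> P} = D"

definition dmod :: "('a, 'c) ring_scheme \<Rightarrow> 'q set \<Rightarrow> ('q, 'a, 'a) qmod" where
  "dmod R D = \<lparr> space = (\<lambda>q.
       \<lparr> carrier = (if q \<in> D then carrier R else {zero R}),
         mult = undefined, one = undefined,
         zero = zero R, add = add R, smult = mult R \<rparr>),
     trans = (\<lambda>q q' x. if q' \<in> D then x else zero R) \<rparr>"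

definition dsum :: "'j set \<Rightarrow> ('j \<Rightarrow> ('q, 'a, 'v) qmod) \<Rightarrow> ('q, 'a, 'j \<Rightarrow> 'v) qmod" where
  "dsum J E = \<lparr> space = (\<lambda>q.
       \<lparr> carrier = (\<Pi>\<^sub>E j\<in>J. carrier (space (E j) q)),
         mult = undefined, one = undefined,
         zero = (\<lambda>j\<in>J. zero (space (E j) q)),
         add = (\<lambda>x y. \<lambda>j\<in>J. add (space (E j) q) (x j) (y j)),
         smult = (\<lambda>a x. \<lambda>j\<in>J. smult (space (E j) q) a (x j)) \<rparr>),
     trans = (\<lambda>q q' x. \<lambda>j\<in>J. trans (E j) q q' (x j)) \<rparr>"

definition downset_finite :: "'q::ab_group_add set \<Rightarrow> ('a, 'c) ring_scheme \<Rightarrow> ('q, 'a, 'v) qmod \<Rightarrow> bool" where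
  "downset_finite P R M \<longleftrightarrow> (\<exists>(J :: nat set) D \<phi>. finite J \<and> (\<forall>j\<in>J. downset P (D j))
     \<and> qhom P R M (dsum J (\<lambda>j. dmod R (D j))) \<phi>
     \<and> (\<forall>q. inj_on (\<phi> q) (carrier (space M q))))"

end

(* Let M embed into a finite direct sum of downset modules k[D_j].  Every downset D is the
   union of its primary parts D_tau: the downset generated by the points of D at which tau is
   the largest face along which one stays inside D.  Since there are finitely many faces,
   every point of D lies below such a point.  Composing the hull with the projection to k[D_j]
   and restricting to D_tau gives maps M -> k[D_tau] whose kernels intersect in zero.  The
   image of M in k[D_tau] is tau-coprimary: it embeds into its localization along tau because
   D_tau + tau stays inside D_tau, and every nonzero element can be pushed up to a point from
   which every face not contained in tau leaves D_tau, where it is globally supported on tau. *)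

theory Submission
  imports Defs
begin

section \<open>Faces and downsets\<close>

lemma pogroup_zero: "pogroup P \<Longrightarrow> 0 \<in> P"
  unfolding pogroup_def by blast

lemma pogroup_add: "pogroup P \<Longrightarrow> a \<in> P \<Longrightarrow> b \<in> P \<Longrightarrow> a + b \<in> P"
  unfolding pogroup_def by blast

lemma face_subset: "face P \<sigma> \<Longrightarrow> \<sigma> \<subseteq> P"
  unfolding face_def by blast

lemma face_zero: "face P \<sigma> \<Longrightarrow> 0 \<in> \<sigma>"
  unfolding face_def by blast

lemma face_add: "face P \<sigma> \<Longrightarrow> a \<in> \<sigma> \<Longrightarrow> b \<in> \<sigma> \<Longrightarrow> a + b \<in> \<sigma>"
  unfolding face_def by blast

lemma face_singleton_zero: "pogroup P \<Longrightarrow> face P {0}"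
  unfolding face_def pogroup_def by (auto simp: add_eq_0_iff2 minus_equation_iff)

lemma qle_refl: "pogroup P \<Longrightarrow> qle P q q"
  unfolding qle_def pogroup_def by simp

lemma qle_trans: "pogroup P \<Longrightarrow> qle P a b \<Longrightarrow> qle P b c \<Longrightarrow> qle P a c"
  unfolding qle_def using pogroup_add[of P "c - b" "b - a"] by (simp add: algebra_simps)

lemma qle_add_right: "f \<in> P \<Longrightarrow> qle P q (q + f)"
  unfolding qle_def by simp

lemma qle_translate: "qle P p q \<Longrightarrow> qle P (p + r) (q + r)"
  unfolding qle_def by (simp add: algebra_simps)

definition face_join :: "'q::ab_group_add set \<Rightarrow> 'q set \<Rightarrow> 'q set \<Rightarrow> 'q set" where
  "face_join P \<tau> \<sigma> = {p \<in> P. \<exists>a\<in>\<tau>. \<exists>b\<in>\<sigma>. qle P p (a + b)}"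

lemma face_face_join:
  assumes pg: "pogroup P" and ft: "face P \<tau>" and fs: "face P \<sigma>"
  shows "face P (face_join P \<tau> \<sigma>)"
  unfolding face_def
proof (intro conjI ballI)
  show "face_join P \<tau> \<sigma> \<subseteq> P" unfolding face_join_def by blast
  show "0 \<in> face_join P \<tau> \<sigma>"
    unfolding face_join_def
    using pogroup_zero[OF pg] face_zero[OF ft] face_zero[OF fs] qle_refl[OF pg, of 0] by force
next
  fix x y assume "x \<in> face_join P \<tau> \<sigma>" "y \<in> face_join P \<tau> \<sigma>"
  then obtain a b a' b' where ab: "a \<in> \<tau>" "b \<in> \<sigma>" "qle P x (a + b)" "a' \<in> \<tau>" "b' \<in> \<sigma>" "qle P y (a' + b')"
    and xy: "x \<in> P" "y \<in> P"
    unfolding face_join_def by blast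
  have "qle P (x + y) ((a + a') + (b + b'))"
    using ab(3,6) pogroup_add[OF pg, of "a + b - x" "a' + b' - y"] unfolding qle_def
      by (simp add: algebra_simps)
  then show "x + y \<in> face_join P \<tau> \<sigma>"
    unfolding face_join_def using ab xy face_add[OF ft] face_add[OF fs] pogroup_add[OF pg] by blast
next
  fix x y assume x: "x \<in> P - face_join P \<tau> \<sigma>" and y: "y \<in> P"
  have "x \<notin> face_join P \<tau> \<sigma>" using x by blast
  moreover have "qle P x (x + y)" by (rule qle_add_right[OF y])
  ultimately have "x + y \<notin> face_join P \<tau> \<sigma>"
    unfolding face_join_def using x qle_trans[OF pg] by blast
  then show "x + y \<in> P - face_join P \<tau> \<sigma>" using x y pogroup_add[OF pg] by blast
qed

lemma subset_face_join:
  assumes pg: "pogroup P" and ft: "face P \<tau>" and fs: "face P \<sigma>"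
  shows "\<tau> \<subseteq> face_join P \<tau> \<sigma>" and "\<sigma> \<subseteq> face_join P \<tau> \<sigma>"
  unfolding face_join_def
  using face_subset[OF ft] face_subset[OF fs] face_zero[OF ft] face_zero[OF fs] qle_refl[OF pg]
  by force+

definition down_closed :: "'q::ab_group_add set \<Rightarrow> 'q set \<Rightarrow> bool" where
  "down_closed P E \<longleftrightarrow> (\<forall>p q. qle P p q \<longrightarrow> q \<in> E \<longrightarrow> p \<in> E)"

lemma down_closedD: "down_closed P E \<Longrightarrow> qle P p q \<Longrightarrow> q \<in> E \<Longrightarrow> p \<in> E"
  unfolding down_closed_def by blast

lemma downset_imp_down_closed: "downset P D \<Longrightarrow> down_closed P D"
  unfolding downset_def down_closed_def qle_def
proof (intro allI impI)
  fix p q assume D: "{d - p |d p. d \<in> D \<and> p \<in> P} = D" and "q - p \<in> P" and "q \<in> D"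
  moreover have "p = q - (q - p)" by simp
  ultimately have "p \<in> {d - p |d p. d \<in> D \<and> p \<in> P}" by blast
  then show "p \<in> D" using D by simp
qed

definition faces_within :: "'q::ab_group_add set \<Rightarrow> 'q set \<Rightarrow> 'q \<Rightarrow> 'q set set" where
  "faces_within P D g = {\<sigma>. face P \<sigma> \<and> (\<forall>f\<in>\<sigma>. g + f \<in> D)}"

definition primary_points :: "'q::ab_group_add set \<Rightarrow> 'q set \<Rightarrow> 'q set \<Rightarrow> 'q set" where
  "primary_points P D \<tau> = {g. \<tau> \<in> faces_within P D g \<and> (\<forall>\<sigma>\<in>faces_within P D g. \<sigma> \<subseteq> \<tau>)}"

definition primary_part :: "'q::ab_group_add set \<Rightarrow> 'q set \<Rightarrow> 'q set \<Rightarrow> 'q set" where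
  "primary_part P D \<tau> = {q. \<exists>g\<in>primary_points P D \<tau>. qle P q g}"

definition exit_region :: "'q::ab_group_add set \<Rightarrow> 'q set \<Rightarrow> 'q set \<Rightarrow> 'q set" where
  "exit_region P E \<tau> = {q. \<forall>\<tau>'. face P \<tau>' \<and> \<not> \<tau>' \<subseteq> \<tau> \<longrightarrow> (\<exists>h\<in>\<tau>'. q + h \<notin> E)}"

definition coprimary_downset :: "'q::ab_group_add set \<Rightarrow> 'q set \<Rightarrow> 'q set \<Rightarrow> bool" where
  "coprimary_downset P \<tau> E \<longleftrightarrow> down_closed P E \<and> (\<forall>q\<in>E. \<forall>f\<in>\<tau>. q + f \<in> E)
     \<and> (\<forall>q\<in>E. \<exists>g\<in>E \<inter> exit_region P E \<tau>. qle P q g)"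

lemma faces_within_antimono:
  assumes dc: "down_closed P D" and le: "qle P g g'"
  shows "faces_within P D g' \<subseteq> faces_within P D g"
  unfolding faces_within_def using down_closedD[OF dc qle_translate[OF le]] by (auto simp: add.commute)

lemma exit_region_mono:
  assumes dc: "down_closed P E" and le: "qle P q q'" and q: "q \<in> exit_region P E \<tau>"
  shows "q' \<in> exit_region P E \<tau>"
  using q down_closedD[OF dc qle_translate[OF le]] unfolding exit_region_def by blast

context
  fixes P :: "'q::ab_group_add set" and D :: "'q set"
  assumes pg: "pogroup P" and fin: "finite {\<sigma>. face P \<sigma>}" and dc: "down_closed P D"
begin

lemma finite_faces_within: "finite (faces_within P D g)"
  using fin unfolding faces_within_def by (rule rev_finite_subset) blast

lemma maximal_face_within_exits:
  assumes t: "\<tau> \<in> faces_within P D g" and tmax: "\<And>\<rho>. \<rho> \<in> faces_within P D g \<Longrightarrow> \<tau> \<subseteq> \<rho> \<Longrightarrow> \<tau> = \<rho>"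
    and s: "\<sigma> \<in> faces_within P D g" and "\<not> \<sigma> \<subseteq> \<tau>"
  shows "\<exists>a\<in>\<tau>. \<exists>b\<in>\<sigma>. g + a + b \<notin> D"
proof (rule ccontr)
  assume "\<not> (\<exists>a\<in>\<tau>. \<exists>b\<in>\<sigma>. g + a + b \<notin> D)"
  then have inside: "\<And>a b. a \<in> \<tau> \<Longrightarrow> b \<in> \<sigma> \<Longrightarrow> g + a + b \<in> D" by blast
  have ft: "face P \<tau>" and fs: "face P \<sigma>" using t s unfolding faces_within_def by auto
  have "g + f \<in> D" if f: "f \<in> face_join P \<tau> \<sigma>" for f
  proof -
    obtain a b where "a \<in> \<tau>" "b \<in> \<sigma>" "qle P f (a + b)" using f unfolding face_join_def by blast
    then show ?thesis
      using inside down_closedD[OF dc qle_translate[of P f "a + b" g]]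
        by (simp add: add.commute add.left_commute)
  qed
  then have "face_join P \<tau> \<sigma> \<in> faces_within P D g"
    unfolding faces_within_def using face_face_join[OF pg ft fs] by blast
  then show False using tmax subset_face_join[OF pg ft fs] \<open>\<not> \<sigma> \<subseteq> \<tau>\<close> by blast
qed

text \<open>Moving up along a face \<tau> that is maximal but not greatest among the faces within D
  strictly shrinks the set of faces within D, so the process terminates at a point where
  some face is greatest.\<close>

lemma exists_primary_point_above:
  "g \<in> D \<Longrightarrow> \<exists>\<tau> g'. face P \<tau> \<and> g' \<in> primary_points P D \<tau> \<and> qle P g g'"
proof (induction "card (faces_within P D g)" arbitrary: g rule: less_induct)
  case less
  have "{0} \<in> faces_within P D g"
    using face_singleton_zero[OF pg] less.prems unfolding faces_within_def by simp
  then obtain \<tau> where t: "\<tau> \<in> faces_within P D g"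
    and tmax: "\<And>\<rho>. \<rho> \<in> faces_within P D g \<Longrightarrow> \<tau> \<subseteq> \<rho> \<Longrightarrow> \<tau> = \<rho>"
    using finite_has_maximal[OF finite_faces_within, of g] by blast
  have ft: "face P \<tau>" using t unfolding faces_within_def by blast
  show ?case
  proof (cases "\<forall>\<sigma>\<in>faces_within P D g. \<sigma> \<subseteq> \<tau>")
    case True
    then show ?thesis using t ft qle_refl[OF pg] unfolding primary_points_def by blast
  next
    case False
    then obtain \<sigma> where s: "\<sigma> \<in> faces_within P D g" "\<not> \<sigma> \<subseteq> \<tau>" by blast
    then obtain a b where ab: "a \<in> \<tau>" "b \<in> \<sigma>" "g + a + b \<notin> D"
      using maximal_face_within_exits[OF t tmax] by blast
    have le: "qle P g (g + a)" using qle_add_right face_subset[OF ft] ab(1) by blast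
    have "\<sigma> \<notin> faces_within P D (g + a)" using ab(2,3) unfolding faces_within_def by blast
    then have "faces_within P D (g + a) \<subset> faces_within P D g"
      using faces_within_antimono[OF dc le] s(1) by blast
    then have "card (faces_within P D (g + a)) < card (faces_within P D g)"
      by (rule psubset_card_mono[OF finite_faces_within])
    moreover have "g + a \<in> D" using t ab(1) unfolding faces_within_def by blast
    ultimately obtain \<tau>' g' where "face P \<tau>'" "g' \<in> primary_points P D \<tau>'" "qle P (g + a) g'"
      using less.hyps[of "g + a"] by blast
    then show ?thesis using le qle_trans[OF pg] by blast
  qed
qed

lemma primary_part_cover: "q \<in> D \<Longrightarrow> \<exists>\<tau>. face P \<tau> \<and> q \<in> primary_part P D \<tau>"
  unfolding primary_part_def using exists_primary_point_above by blast

lemma primary_part_subset: "primary_part P D \<tau> \<subseteq> D"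
proof
  fix q assume "q \<in> primary_part P D \<tau>"
  then obtain g where "\<tau> \<in> faces_within P D g" "qle P q g"
    unfolding primary_part_def primary_points_def by blast
  then show "q \<in> D"
    using down_closedD[OF dc] face_zero[of P \<tau>] unfolding faces_within_def by fastforce
qed

lemma primary_points_add_face:
  assumes ft: "face P \<tau>" and g: "g \<in> primary_points P D \<tau>" and f: "f \<in> \<tau>"
  shows "g + f \<in> primary_points P D \<tau>"
proof -
  have le: "qle P g (g + f)" using qle_add_right face_subset[OF ft] f by blast
  have "\<tau> \<in> faces_within P D (g + f)"
    using g face_add[OF ft f] ft unfolding primary_points_def faces_within_def by (simp add: add.assoc)
  then show ?thesis using g faces_within_antimono[OF dc le] unfolding primary_points_def by blast
qed

lemma primary_part_coprimary:
  assumes ft: "face P \<tau>"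
  shows "coprimary_downset P \<tau> (primary_part P D \<tau>)"
  unfolding coprimary_downset_def
proof (intro conjI ballI)
  show "down_closed P (primary_part P D \<tau>)"
    unfolding down_closed_def primary_part_def using qle_trans[OF pg] by blast
next
  fix q f assume "q \<in> primary_part P D \<tau>" and f: "f \<in> \<tau>"
  then obtain g where "g \<in> primary_points P D \<tau>" "qle P q g" unfolding primary_part_def by blast
  then show "q + f \<in> primary_part P D \<tau>"
    unfolding primary_part_def using primary_points_add_face[OF ft _ f] qle_translate by blast
next
  fix q assume "q \<in> primary_part P D \<tau>"
  then obtain g where g: "g \<in> primary_points P D \<tau>" "qle P q g" unfolding primary_part_def by blast
  have "g \<in> primary_part P D \<tau>" using g qle_refl[OF pg] unfolding primary_part_def by blast
  moreover have "g \<in> exit_region P (primary_part P D \<tau>) \<tau>"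
    using g(1) primary_part_subset unfolding exit_region_def primary_points_def faces_within_def by blast
  ultimately show "\<exists>g\<in>primary_part P D \<tau> \<inter> exit_region P (primary_part P D \<tau>) \<tau>. qle P q g"
    using g(2) by blast
qed

end

section \<open>Maps into downset modules\<close>

lemma qmodule_module: "qmodule P R M \<Longrightarrow> module R (space M q)"
  unfolding qmodule_def by blast

lemma qmodule_trans_closed:
  "qmodule P R M \<Longrightarrow> qle P q q' \<Longrightarrow> m \<in> carrier (space M q) \<Longrightarrow> trans M q q' m \<in> carrier (space M q')"
  unfolding qmodule_def linmap_def by blast

lemma qmodule_zero_closed: "qmodule P R M \<Longrightarrow> zero (space M q) \<in> carrier (space M q)"
proof -
  assume "qmodule P R M"
  then interpret module R "space M q" by (rule qmodule_module)
  show ?thesis by simp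
qed

lemma qhom_dmod_value:
  assumes "qhom P R M (dmod R E) v" and "m \<in> carrier (space M q)"
  shows "v q m \<in> (if q \<in> E then carrier R else {zero R})"
proof -
  have "v q \<in> carrier (space M q) \<rightarrow> carrier (space (dmod R E) q)"
    using assms(1) unfolding qhom_def linmap_def by blast
  then show ?thesis using assms(2) by (auto simp: dmod_def)
qed

lemma qhom_dmod_support:
  "qhom P R M (dmod R E) v \<Longrightarrow> m \<in> carrier (space M q) \<Longrightarrow> q \<notin> E \<Longrightarrow> v q m = zero R"
  using qhom_dmod_value by fastforce

lemma qhom_dmod_carrier:
  "cring R \<Longrightarrow> qhom P R M (dmod R E) v \<Longrightarrow> m \<in> carrier (space M q) \<Longrightarrow> v q m \<in> carrier R"
  using qhom_dmod_value[of P R M E v m q] cring.cring_simprules(2) by (fastforce split: if_splits)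

lemma qhom_dmod_add:
  "qhom P R M (dmod R E) v \<Longrightarrow> m \<in> carrier (space M q) \<Longrightarrow> m' \<in> carrier (space M q)
    \<Longrightarrow> v q (add (space M q) m m') = add R (v q m) (v q m')"
  unfolding qhom_def linmap_def dmod_def by auto

lemma qhom_dmod_smult:
  "qhom P R M (dmod R E) v \<Longrightarrow> a \<in> carrier R \<Longrightarrow> m \<in> carrier (space M q)
    \<Longrightarrow> v q (smult (space M q) a m) = mult R a (v q m)"
  unfolding qhom_def linmap_def dmod_def by auto

lemma qhom_dmod_trans:
  "qhom P R M (dmod R E) v \<Longrightarrow> qle P q q' \<Longrightarrow> m \<in> carrier (space M q)
    \<Longrightarrow> v q' (trans M q q' m) = (if q' \<in> E then v q m else zero R)"
  unfolding qhom_def by (simp add: dmod_def)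

lemma qhom_dmodI:
  assumes "\<And>q m. m \<in> carrier (space M q) \<Longrightarrow> v q m \<in> carrier R"
    and "\<And>q m. m \<in> carrier (space M q) \<Longrightarrow> q \<notin> E \<Longrightarrow> v q m = zero R"
    and "\<And>q m m'. m \<in> carrier (space M q) \<Longrightarrow> m' \<in> carrier (space M q)
           \<Longrightarrow> v q (add (space M q) m m') = add R (v q m) (v q m')"
    and "\<And>q a m. a \<in> carrier R \<Longrightarrow> m \<in> carrier (space M q)
           \<Longrightarrow> v q (smult (space M q) a m) = mult R a (v q m)"
    and "\<And>q q' m. qle P q q' \<Longrightarrow> m \<in> carrier (space M q)
           \<Longrightarrow> v q' (trans M q q' m) = (if q' \<in> E then v q m else zero R)"
  shows "qhom P R M (dmod R E) v"
  unfolding qhom_def linmap_def dmod_def using assms by auto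

lemma qhom_dmod_zero:
  assumes cr: "cring R" and M: "qmodule P R M" and v: "qhom P R M (dmod R E) v"
  shows "v q (zero (space M q)) = zero R"
proof -
  interpret R: cring R by (rule cr)
  interpret V: module R "space M q" by (rule qmodule_module[OF M])
  have "v q (zero (space M q)) = add R (v q (zero (space M q))) (v q (zero (space M q)))"
    using qhom_dmod_add[OF v, of "zero (space M q)" q "zero (space M q)"] by simp
  then show ?thesis using qhom_dmod_carrier[OF cr v V.zero_closed] by (metis R.add.l_cancel_one')
qed

lemma qhom_dmod_neg:
  assumes cr: "cring R" and M: "qmodule P R M" and v: "qhom P R M (dmod R E) v"
    and m: "m \<in> carrier (space M q)"
  shows "v q (a_inv (space M q) m) = a_inv R (v q m)"
proof -
  interpret R: cring R by (rule cr)
  interpret V: module R "space M q" by (rule qmodule_module[OF M])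
  have "add R (v q (a_inv (space M q) m)) (v q m) = zero R"
    using qhom_dmod_add[OF v, of "a_inv (space M q) m" q m] m qhom_dmod_zero[OF cr M v]
      by (simp add: V.l_neg)
  then show ?thesis using qhom_dmod_carrier[OF cr v] m by (metis R.minus_equality V.a_inv_closed)
qed

definition scalar_embedding :: "('a, 'c) ring_scheme \<Rightarrow> ('a, 'w) module \<Rightarrow> ('w \<Rightarrow> 'a) \<Rightarrow> bool" where
  "scalar_embedding R V v \<longleftrightarrow> inj_on v (carrier V) \<and> v \<in> carrier V \<rightarrow> carrier R
     \<and> zero V \<in> carrier V \<and> v (zero V) = zero R
     \<and> (\<forall>x\<in>carrier V. \<forall>y\<in>carrier V. add V x y \<in> carrier V \<and> v (add V x y) = add R (v x) (v y))
     \<and> (\<forall>a\<in>carrier R. \<forall>x\<in>carrier V. smult V a x \<in> carrier V \<and> v (smult V a x) = mult R a (v x))"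

text \<open>The module axioms are pulled back along the injective map into R.\<close>

lemma scalar_embedding_module:
  assumes cr: "cring R" and emb: "scalar_embedding R V v"
  shows "module R V"
proof -
  interpret R: cring R by (rule cr)
  note defs = emb[unfolded scalar_embedding_def]
  have eq: "\<And>x y. x \<in> carrier V \<Longrightarrow> y \<in> carrier V \<Longrightarrow> v x = v y \<Longrightarrow> x = y"
    using defs by (meson inj_onD)
  have closed: "\<And>x. x \<in> carrier V \<Longrightarrow> v x \<in> carrier R" using defs by blast
  have neg: "\<exists>y\<in>carrier V. add V y x = zero V" if x: "x \<in> carrier V" for x
  proof
    show "smult V (a_inv R \<one>\<^bsub>R\<^esub>) x \<in> carrier V" using defs x by simp
    show "add V (smult V (a_inv R \<one>\<^bsub>R\<^esub>) x) x = zero V"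
      using defs x closed by (intro eq) (simp_all add: R.l_minus R.l_neg)
  qed
  show ?thesis
    by (intro moduleI[OF cr] abelian_groupI neg; (intro eq)?)
      (use defs closed in \<open>simp_all add: R.a_ac R.l_distr R.r_distr R.m_assoc\<close>)
qed

definition dmod_embedding :: "'q::ab_group_add set \<Rightarrow> ('a, 'c) ring_scheme \<Rightarrow> 'q set
    \<Rightarrow> ('q, 'a, 'w) qmod \<Rightarrow> ('q \<Rightarrow> 'w \<Rightarrow> 'a) \<Rightarrow> bool" where
  "dmod_embedding P R E A v \<longleftrightarrow> qmodule P R A \<and> qhom P R A (dmod R E) v
     \<and> (\<forall>q. inj_on (v q) (carrier (space A q)))"

lemma dmod_embedding_qmodule: "dmod_embedding P R E A v \<Longrightarrow> qmodule P R A"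
  unfolding dmod_embedding_def by blast

lemma dmod_embedding_qhom: "dmod_embedding P R E A v \<Longrightarrow> qhom P R A (dmod R E) v"
  unfolding dmod_embedding_def by blast

lemma dmod_embedding_eqI:
  "dmod_embedding P R E A v \<Longrightarrow> x \<in> carrier (space A q) \<Longrightarrow> y \<in> carrier (space A q)
    \<Longrightarrow> v q x = v q y \<Longrightarrow> x = y"
  unfolding dmod_embedding_def by (meson inj_onD)

lemma dmod_embeddingI:
  assumes cr: "cring R" and pg: "pogroup P" and dc: "down_closed P E"
    and emb: "\<And>q. scalar_embedding R (space A q) (v q)"
    and supp: "\<And>q x. x \<in> carrier (space A q) \<Longrightarrow> q \<notin> E \<Longrightarrow> v q x = zero R"
    and tr: "\<And>q q' x. qle P q q' \<Longrightarrow> x \<in> carrier (space A q) \<Longrightarrow> trans A q q' x \<in> carrier (space A q')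
               \<and> v q' (trans A q q' x) = (if q' \<in> E then v q x else zero R)"
  shows "dmod_embedding P R E A v"
proof -
  interpret R: cring R by (rule cr)
  note defs = emb[unfolded scalar_embedding_def]
  have eq: "\<And>q x y. x \<in> carrier (space A q) \<Longrightarrow> y \<in> carrier (space A q) \<Longrightarrow> v q x = v q y \<Longrightarrow> x = y"
    using defs by (meson inj_onD)
  have closed: "\<And>q x. x \<in> carrier (space A q) \<Longrightarrow> v q x \<in> carrier R" using defs by blast
  have "qmodule P R A"
    unfolding qmodule_def linmap_def
  proof (intro conjI allI impI ballI)
    fix q show "module R (space A q)" by (rule scalar_embedding_module[OF cr emb])
  next
    fix q m assume "m \<in> carrier (space A q)"
    then show "trans A q q m = m"
      using tr[OF qle_refl[OF pg]] supp by (intro eq) (auto split: if_splits)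
  next
    fix q q' q'' m assume "qle P q q' \<and> qle P q' q'' \<and> m \<in> carrier (space A q)"
    then show "trans A q' q'' (trans A q q' m) = trans A q q'' m"
      using tr qle_trans[OF pg] down_closedD[OF dc] by (intro eq[of _ q'']) (auto split: if_splits)
  next
    fix q q' assume "qle P q q'"
    note tr = tr[OF this]
    show "trans A q q' \<in> carrier (space A q) \<rightarrow> carrier (space A q')" using tr by blast
    fix x y assume "x \<in> carrier (space A q)" "y \<in> carrier (space A q)"
    then show "trans A q q' (add (space A q) x y) = add (space A q') (trans A q q' x) (trans A q q' y)"
      using tr defs closed by (intro eq[of _ q']) simp_all
  next
    fix q q' a x assume "qle P q q'" "a \<in> carrier R" "x \<in> carrier (space A q)"
    then show "trans A q q' (smult (space A q) a x) = smult (space A q') a (trans A q q' x)"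
      using tr defs closed by (intro eq[of _ q']) simp_all
  qed
  moreover have "qhom P R A (dmod R E) v"
    by (rule qhom_dmodI) (use closed supp defs tr in auto)
  ultimately show ?thesis unfolding dmod_embedding_def using defs by blast
qed

section \<open>Localization along a face\<close>

definition pair_value :: "('q::ab_group_add \<Rightarrow> 'w \<Rightarrow> 'a) \<Rightarrow> 'q \<Rightarrow> 'q \<times> 'w \<Rightarrow> 'a" where
  "pair_value v q p = v (q + fst p) (snd p)"

definition loc_value :: "('q::ab_group_add \<Rightarrow> 'w \<Rightarrow> 'a) \<Rightarrow> 'q \<Rightarrow> ('q \<times> 'w) set \<Rightarrow> 'a" where
  "loc_value v q X = pair_value v q (SOME p. p \<in> X)"

context
  fixes P :: "'q::ab_group_add set" and R :: "('a, 'c) ring_scheme" and E :: "'q set"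
    and A :: "('q, 'a, 'w) qmod" and v :: "'q \<Rightarrow> 'w \<Rightarrow> 'a" and \<sigma> :: "'q set"
  assumes cr: "cring R" and pg: "pogroup P" and fc: "face P \<sigma>" and dc: "down_closed P E"
    and A: "dmod_embedding P R E A v"
begin

private lemmas A_qmodule = dmod_embedding_qmodule[OF A] and A_qhom = dmod_embedding_qhom[OF A]

private lemma qle_add_face: "f \<in> \<sigma> \<Longrightarrow> qle P q (q + f)"
  using qle_add_right face_subset[OF fc] by blast

lemma loceq_iff:
  assumes "(f, x) \<in> locpairs A \<sigma> q" and "(g, y) \<in> locpairs A \<sigma> q"
  shows "loceq A \<sigma> q (f, x) (g, y) \<longleftrightarrow> (\<exists>h\<in>\<sigma>. q + f + g + h \<in> E \<longrightarrow> v (q + f) x = v (q + g) y)"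
proof -
  have f: "f \<in> \<sigma>" and x: "x \<in> carrier (space A (q + f))"
    and g: "g \<in> \<sigma>" and y: "y \<in> carrier (space A (q + g))"
    using assms unfolding locpairs_def by auto
  have "trans A (q + f) (q + f + g + h) x = trans A (q + g) (q + f + g + h) y
      \<longleftrightarrow> (q + f + g + h \<in> E \<longrightarrow> v (q + f) x = v (q + g) y)" if h: "h \<in> \<sigma>" for h
  proof -
    have l1: "qle P (q + f) (q + f + g + h)"
      using qle_add_face[OF face_add[OF fc g h], of "q + f"] by (simp add: add.assoc)
    have l2: "qle P (q + g) (q + f + g + h)"
      using qle_add_face[OF face_add[OF fc f h], of "q + g"] by (simp add: algebra_simps)
    note c = qmodule_trans_closed[OF A_qmodule l1 x] qmodule_trans_closed[OF A_qmodule l2 y]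
      and t = qhom_dmod_trans[OF A_qhom l1 x] qhom_dmod_trans[OF A_qhom l2 y]
    show ?thesis
    proof
      assume "trans A (q + f) (q + f + g + h) x = trans A (q + g) (q + f + g + h) y"
      then show "q + f + g + h \<in> E \<longrightarrow> v (q + f) x = v (q + g) y" using t by auto
    next
      assume "q + f + g + h \<in> E \<longrightarrow> v (q + f) x = v (q + g) y"
      then show "trans A (q + f) (q + f + g + h) x = trans A (q + g) (q + f + g + h) y"
        using t by (intro dmod_embedding_eqI[OF A c]) auto
    qed
  qed
  then show ?thesis unfolding loceq_def by simp
qed

lemma loceq_refl: "loceq A \<sigma> q p p"
  unfolding loceq_def using face_zero[OF fc] by blast

lemma locmap_eq_zero_iff:
  assumes x: "x \<in> carrier (space A q)"
  shows "locmap A \<sigma> q x = zero (space (loc A \<sigma>) q) \<longleftrightarrow> v q x = zero R \<or> (\<exists>h\<in>\<sigma>. q + h \<notin> E)"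
proof -
  define z where "z = zero (space A q)"
  have z: "z \<in> carrier (space A q)" "v q z = zero R"
    unfolding z_def
    using qmodule_zero_closed[OF A_qmodule] qhom_dmod_zero[OF cr A_qmodule A_qhom] by auto
  have px: "(0, x) \<in> locpairs A \<sigma> q" and pz: "(0, z) \<in> locpairs A \<sigma> q"
    using x z face_zero[OF fc] unfolding locpairs_def by auto
  have "locmap A \<sigma> q x = zero (space (loc A \<sigma>) q) \<longleftrightarrow> loccls A \<sigma> q (0, x) = loccls A \<sigma> q (0, z)"
    unfolding locmap_def loc_def z_def by simp
  also have "\<dots> \<longleftrightarrow> loceq A \<sigma> q (0, x) (0, z)"
  proof
    assume "loccls A \<sigma> q (0, x) = loccls A \<sigma> q (0, z)"
    moreover have "(0, z) \<in> loccls A \<sigma> q (0, z)" using pz loceq_refl unfolding loccls_def by blast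
    ultimately show "loceq A \<sigma> q (0, x) (0, z)" unfolding loccls_def by blast
  next
    assume xz: "loceq A \<sigma> q (0, x) (0, z)"
    have "loceq A \<sigma> q (0, x) p \<longleftrightarrow> loceq A \<sigma> q (0, z) p" if p: "p \<in> locpairs A \<sigma> q" for p
    proof -
      obtain g y where gy: "p = (g, y)" by (cases p)
      have "g \<in> P" using p face_subset[OF fc] unfolding gy locpairs_def by auto
      then have "q + h \<notin> E \<Longrightarrow> q + g + h \<notin> E" for h
        using down_closedD[OF dc qle_translate[OF qle_add_right[of g P q], of h]] by blast
      then show ?thesis
        using xz z unfolding gy loceq_iff[OF px p[unfolded gy]] loceq_iff[OF pz p[unfolded gy]]
          loceq_iff[OF px pz] by auto
    qed
    then show "loccls A \<sigma> q (0, x) = loccls A \<sigma> q (0, z)" unfolding loccls_def by blast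
  qed
  also have "\<dots> \<longleftrightarrow> v q x = zero R \<or> (\<exists>h\<in>\<sigma>. q + h \<notin> E)"
    unfolding loceq_iff[OF px pz] using z face_zero[OF fc] by auto
  finally show ?thesis .
qed

text \<open>If E is closed under adding \<sigma>, the fraction m / x^f in degree q has the well-defined value
  v (q + f) m, so the localization along \<sigma> embeds into k[E] as well.\<close>

context
  assumes cl: "\<And>q f. q \<in> E \<Longrightarrow> f \<in> \<sigma> \<Longrightarrow> q + f \<in> E"
begin

private lemma trans_keeps_value:
  assumes x: "x \<in> carrier (space A p)" and l: "qle P p p'" and c: "p \<in> E \<Longrightarrow> p' \<in> E"
  shows "v p' (trans A p p' x) = v p x"
  using qhom_dmod_trans[OF A_qhom l x] qhom_dmod_support[OF A_qhom x] c by (cases "p \<in> E") auto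

lemma loceq_iff_pair_value_eq:
  assumes p1: "p1 \<in> locpairs A \<sigma> q" and p2: "p2 \<in> locpairs A \<sigma> q"
  shows "loceq A \<sigma> q p1 p2 \<longleftrightarrow> pair_value v q p1 = pair_value v q p2"
proof -
  obtain f x g y where e: "p1 = (f, x)" "p2 = (g, y)" by (cases p1, cases p2)
  have f: "f \<in> \<sigma>" and x: "x \<in> carrier (space A (q + f))"
    and g: "g \<in> \<sigma>" and y: "y \<in> carrier (space A (q + g))"
    using p1 p2 unfolding e locpairs_def by auto
  have "v (q + f) x = v (q + g) y" if h: "h \<in> \<sigma>" and "q + f + g + h \<notin> E" for h
  proof -
    have "q + f \<notin> E" and "q + g \<notin> E"
      using cl[of "q + f" "g + h"] cl[of "q + g" "f + h"] face_add[OF fc] f g h \<open>q + f + g + h \<notin> E\<close>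
      by (auto simp: algebra_simps)
    then show ?thesis using qhom_dmod_support[OF A_qhom x] qhom_dmod_support[OF A_qhom y] by simp
  qed
  then show ?thesis
    unfolding e loceq_iff[OF p1[unfolded e] p2[unfolded e]] pair_value_def
    using face_zero[OF fc] by auto
qed

lemma loccls_eq:
  "p \<in> locpairs A \<sigma> q \<Longrightarrow> loccls A \<sigma> q p = {p' \<in> locpairs A \<sigma> q. pair_value v q p' = pair_value v q p}"
  unfolding loccls_def using loceq_iff_pair_value_eq by (metis (no_types, lifting))

lemma loccls_eqI:
  "p1 \<in> locpairs A \<sigma> q \<Longrightarrow> p2 \<in> locpairs A \<sigma> q \<Longrightarrow> pair_value v q p1 = pair_value v q p2
    \<Longrightarrow> loccls A \<sigma> q p1 = loccls A \<sigma> q p2"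
  using loccls_eq by simp

lemma some_loccls:
  assumes p: "p \<in> locpairs A \<sigma> q"
  shows "(SOME p'. p' \<in> loccls A \<sigma> q p) \<in> locpairs A \<sigma> q"
    and "loc_value v q (loccls A \<sigma> q p) = pair_value v q p"
proof -
  have "p \<in> loccls A \<sigma> q p" using p loccls_eq[OF p] by simp
  then have "(SOME p'. p' \<in> loccls A \<sigma> q p) \<in> loccls A \<sigma> q p" by (rule someI)
  then show "(SOME p'. p' \<in> loccls A \<sigma> q p) \<in> locpairs A \<sigma> q"
    and "loc_value v q (loccls A \<sigma> q p) = pair_value v q p"
    unfolding loc_value_def using loccls_eq[OF p] by auto
qed

lemma loc_carrierE:
  assumes "X \<in> carrier (space (loc A \<sigma>) q)"
  obtains p where "p \<in> locpairs A \<sigma> q" and "X = loccls A \<sigma> q p"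
  using assms unfolding loc_def by auto

lemma loccls_in_carrier: "p \<in> locpairs A \<sigma> q \<Longrightarrow> loccls A \<sigma> q p \<in> carrier (space (loc A \<sigma>) q)"
  unfolding loc_def by simp

lemma loc_carrier_some:
  assumes X: "X \<in> carrier (space (loc A \<sigma>) q)"
  obtains f m where "(SOME p. p \<in> X) = (f, m)" and "f \<in> \<sigma>" and "m \<in> carrier (space A (q + f))"
    and "loc_value v q X = v (q + f) m"
proof -
  obtain p where p: "p \<in> locpairs A \<sigma> q" "X = loccls A \<sigma> q p" using loc_carrierE[OF X] by blast
  obtain f m where fm: "(SOME p. p \<in> X) = (f, m)" by (cases "SOME p. p \<in> X")
  have "(f, m) \<in> locpairs A \<sigma> q" using some_loccls(1)[OF p(1)] fm p(2) by simp
  moreover have "loc_value v q X = v (q + f) m" using fm unfolding loc_value_def pair_value_def by simp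
  ultimately show ?thesis using that fm unfolding locpairs_def by auto
qed

lemma loc_add:
  assumes X: "X \<in> carrier (space (loc A \<sigma>) q)" and Y: "Y \<in> carrier (space (loc A \<sigma>) q)"
  shows "add (space (loc A \<sigma>) q) X Y \<in> carrier (space (loc A \<sigma>) q)"
    and "loc_value v q (add (space (loc A \<sigma>) q) X Y) = add R (loc_value v q X) (loc_value v q Y)"
proof -
  obtain f m where fm: "(SOME p. p \<in> X) = (f, m)" "f \<in> \<sigma>" "m \<in> carrier (space A (q + f))"
    "loc_value v q X = v (q + f) m"
    using loc_carrier_some[OF X] by metis
  obtain g n where gn: "(SOME p. p \<in> Y) = (g, n)" "g \<in> \<sigma>" "n \<in> carrier (space A (q + g))"
    "loc_value v q Y = v (q + g) n"
    using loc_carrier_some[OF Y] by metis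
  have l1: "qle P (q + f) (q + f + g)" by (rule qle_add_face[OF gn(2)])
  have l2: "qle P (q + g) (q + f + g)"
    using qle_add_face[OF fm(2), of "q + g"] by (simp add: algebra_simps)
  have t1: "v (q + f + g) (trans A (q + f) (q + f + g) m) = v (q + f) m"
    by (rule trans_keeps_value[OF fm(3) l1]) (use cl gn(2) in blast)
  have t2: "v (q + f + g) (trans A (q + g) (q + f + g) n) = v (q + g) n"
    by (rule trans_keeps_value[OF gn(3) l2]) (use cl[of "q + g" f] fm(2) in \<open>auto simp: algebra_simps\<close>)
  interpret V: module R "space A (q + f + g)" by (rule qmodule_module[OF A_qmodule])
  define w where
    "w = add (space A (q + f + g)) (trans A (q + f) (q + f + g) m) (trans A (q + g) (q + f + g) n)"
  have w: "w \<in> carrier (space A (q + f + g))" "v (q + f + g) w = add R (v (q + f) m) (v (q + g) n)"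
    unfolding w_def
    using qmodule_trans_closed[OF A_qmodule] l1 l2 fm(3) gn(3) t1 t2 qhom_dmod_add[OF A_qhom] by auto
  have e: "add (space (loc A \<sigma>) q) X Y = loccls A \<sigma> q (f + g, w)"
    unfolding w_def by (simp add: loc_def Let_def fm(1) gn(1))
  have pw: "(f + g, w) \<in> locpairs A \<sigma> q"
    using w face_add[OF fc fm(2) gn(2)] unfolding locpairs_def by (simp add: add.assoc)
  show "add (space (loc A \<sigma>) q) X Y \<in> carrier (space (loc A \<sigma>) q)"
    unfolding e by (rule loccls_in_carrier[OF pw])
  show "loc_value v q (add (space (loc A \<sigma>) q) X Y) = add R (loc_value v q X) (loc_value v q Y)"
    unfolding e some_loccls(2)[OF pw] using w fm(4) gn(4) by (simp add: pair_value_def add.assoc)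
qed

lemma loc_smult:
  assumes a: "a \<in> carrier R" and X: "X \<in> carrier (space (loc A \<sigma>) q)"
  shows "smult (space (loc A \<sigma>) q) a X \<in> carrier (space (loc A \<sigma>) q)"
    and "loc_value v q (smult (space (loc A \<sigma>) q) a X) = mult R a (loc_value v q X)"
proof -
  obtain f m where fm: "(SOME p. p \<in> X) = (f, m)" "f \<in> \<sigma>" "m \<in> carrier (space A (q + f))"
    "loc_value v q X = v (q + f) m"
    using loc_carrier_some[OF X] by metis
  interpret V: module R "space A (q + f)" by (rule qmodule_module[OF A_qmodule])
  define w where "w = smult (space A (q + f)) a m"
  have w: "w \<in> carrier (space A (q + f))" "v (q + f) w = mult R a (v (q + f) m)"
    unfolding w_def using fm(3) a qhom_dmod_smult[OF A_qhom] by auto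
  have e: "smult (space (loc A \<sigma>) q) a X = loccls A \<sigma> q (f, w)"
    unfolding w_def by (simp add: loc_def Let_def fm(1))
  have pw: "(f, w) \<in> locpairs A \<sigma> q" using w fm(2) unfolding locpairs_def by simp
  show "smult (space (loc A \<sigma>) q) a X \<in> carrier (space (loc A \<sigma>) q)"
    unfolding e by (rule loccls_in_carrier[OF pw])
  show "loc_value v q (smult (space (loc A \<sigma>) q) a X) = mult R a (loc_value v q X)"
    unfolding e some_loccls(2)[OF pw] using w fm(4) by (simp add: pair_value_def)
qed

lemma loc_trans:
  assumes X: "X \<in> carrier (space (loc A \<sigma>) q)" and l: "qle P q q'"
  shows "trans (loc A \<sigma>) q q' X \<in> carrier (space (loc A \<sigma>) q')"
    and "loc_value v q' (trans (loc A \<sigma>) q q' X) = (if q' \<in> E then loc_value v q X else zero R)"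
proof -
  obtain f m where fm: "(SOME p. p \<in> X) = (f, m)" "f \<in> \<sigma>" "m \<in> carrier (space A (q + f))"
    "loc_value v q X = v (q + f) m"
    using loc_carrier_some[OF X] by metis
  have l1: "qle P (q + f) (q' + f)" by (rule qle_translate[OF l])
  define w where "w = trans A (q + f) (q' + f) m"
  have w: "w \<in> carrier (space A (q' + f))" "v (q' + f) w = (if q' + f \<in> E then v (q + f) m else zero R)"
    unfolding w_def
    using qmodule_trans_closed[OF A_qmodule l1 fm(3)] qhom_dmod_trans[OF A_qhom l1 fm(3)] by auto
  have e: "trans (loc A \<sigma>) q q' X = loccls A \<sigma> q' (f, w)"
    unfolding w_def by (simp add: loc_def Let_def fm(1))
  have pw: "(f, w) \<in> locpairs A \<sigma> q'" using w fm(2) unfolding locpairs_def by simp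
  show "trans (loc A \<sigma>) q q' X \<in> carrier (space (loc A \<sigma>) q')"
    unfolding e by (rule loccls_in_carrier[OF pw])
  have "q' + f \<in> E \<longleftrightarrow> q' \<in> E" if "q + f \<in> E"
    using cl fm(2) down_closedD[OF dc qle_add_face[OF fm(2)]] by blast
  then have "v (q' + f) w = (if q' \<in> E then v (q + f) m else zero R)"
    using w qhom_dmod_support[OF A_qhom fm(3)] by (cases "q + f \<in> E") auto
  then show "loc_value v q' (trans (loc A \<sigma>) q q' X) = (if q' \<in> E then loc_value v q X else zero R)"
    unfolding e some_loccls(2)[OF pw] using fm(4) by (simp add: pair_value_def)
qed

lemma loc_dmod_embedding: "dmod_embedding P R E (loc A \<sigma>) (loc_value v)"
proof (rule dmod_embeddingI[OF cr pg dc])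
  fix q
  have pz: "(0, zero (space A q)) \<in> locpairs A \<sigma> q"
    using qmodule_zero_closed[OF A_qmodule] face_zero[OF fc] unfolding locpairs_def by auto
  have ez: "zero (space (loc A \<sigma>) q) = loccls A \<sigma> q (0, zero (space A q))" by (simp add: loc_def)
  have "inj_on (loc_value v q) (carrier (space (loc A \<sigma>) q))"
  proof (rule inj_onI)
    fix X Y assume "X \<in> carrier (space (loc A \<sigma>) q)" "Y \<in> carrier (space (loc A \<sigma>) q)"
      and "loc_value v q X = loc_value v q Y"
    then show "X = Y" using loccls_eqI some_loccls(2) by (metis loc_carrierE)
  qed
  then show "scalar_embedding R (space (loc A \<sigma>) q) (loc_value v q)"
    unfolding scalar_embedding_def ez some_loccls(2)[OF pz]
    using loccls_in_carrier[OF pz] loc_add loc_smult loc_carrier_some qhom_dmod_carrier[OF cr A_qhom]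
      qhom_dmod_zero[OF cr A_qmodule A_qhom] by (auto simp: pair_value_def) (metis)
next
  fix q X assume X: "X \<in> carrier (space (loc A \<sigma>) q)" and "q \<notin> E"
  obtain f m where "f \<in> \<sigma>" "m \<in> carrier (space A (q + f))" "loc_value v q X = v (q + f) m"
    using loc_carrier_some[OF X] by metis
  moreover have "q + f \<notin> E" if "f \<in> \<sigma>" for f
    using down_closedD[OF dc qle_add_face[OF that]] \<open>q \<notin> E\<close> by blast
  ultimately show "loc_value v q X = zero R" using qhom_dmod_support[OF A_qhom] by metis
qed (use loc_trans in auto)

lemma locmap_inj_on: "inj_on (locmap A \<sigma> q) (carrier (space A q))"
proof (rule inj_onI)
  fix x y assume x: "x \<in> carrier (space A q)" and y: "y \<in> carrier (space A q)"
    and "locmap A \<sigma> q x = locmap A \<sigma> q y"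
  moreover have "(0, x) \<in> locpairs A \<sigma> q" and "(0, y) \<in> locpairs A \<sigma> q"
    using x y face_zero[OF fc] unfolding locpairs_def by auto
  ultimately have "pair_value v q (0, x) = pair_value v q (0, y)"
    using some_loccls(2) unfolding locmap_def by metis
  then show "x = y" using dmod_embedding_eqI[OF A x y] by (simp add: pair_value_def)
qed

end

end

section \<open>Coprimary quotients\<close>

definition qkernel :: "('a, 'c) ring_scheme \<Rightarrow> ('q, 'a, 'v) qmod \<Rightarrow> ('q \<Rightarrow> 'v \<Rightarrow> 'a) \<Rightarrow> 'q \<Rightarrow> 'v set" where
  "qkernel R M v q = {m \<in> carrier (space M q). v q m = zero R}"

definition quot_value :: "('q \<Rightarrow> 'v \<Rightarrow> 'a) \<Rightarrow> 'q \<Rightarrow> 'v set \<Rightarrow> 'a" where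
  "quot_value v q X = v q (SOME m. m \<in> X)"

context
  fixes P :: "'q::ab_group_add set" and R :: "('a, 'c) ring_scheme" and E :: "'q set"
    and M :: "('q, 'a, 'v) qmod" and v :: "'q \<Rightarrow> 'v \<Rightarrow> 'a"
  assumes cr: "cring R" and qm: "qmodule P R M" and vh: "qhom P R M (dmod R E) v"
begin

lemma qkernel_qsubmodule: "qsubmodule P R M (qkernel R M v)"
  unfolding qsubmodule_def
proof (intro conjI allI impI)
  fix q
  interpret R: cring R by (rule cr)
  interpret V: module R "space M q" by (rule qmodule_module[OF qm])
  show "qkernel R M v q \<subseteq> carrier (space M q)" unfolding qkernel_def by blast
  show "submodule (qkernel R M v q) R (space M q)"
    by (rule V.submoduleI) (auto simp: qkernel_def qhom_dmod_zero[OF cr qm vh] qhom_dmod_neg[OF cr qm vh]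
        qhom_dmod_add[OF vh] qhom_dmod_smult[OF vh] qhom_dmod_carrier[OF cr vh])
next
  fix q q' assume "qle P q q'"
  then show "trans M q q' ` qkernel R M v q \<subseteq> qkernel R M v q'"
    unfolding qkernel_def using qhom_dmod_trans[OF vh] qmodule_trans_closed[OF qm] by auto
qed

lemma qcls_qkernel:
  assumes m: "m \<in> carrier (space M q)"
  shows "qcls M (qkernel R M v) q m = {x \<in> carrier (space M q). v q x = v q m}"
proof
  interpret R: cring R by (rule cr)
  interpret V: module R "space M q" by (rule qmodule_module[OF qm])
  note v_simps = qhom_dmod_add[OF vh] qhom_dmod_neg[OF cr qm vh] qhom_dmod_carrier[OF cr vh]
  show "qcls M (qkernel R M v) q m \<subseteq> {x \<in> carrier (space M q). v q x = v q m}"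
    unfolding qcls_def qkernel_def using m v_simps by auto
  show "{x \<in> carrier (space M q). v q x = v q m} \<subseteq> qcls M (qkernel R M v) q m"
  proof
    fix x assume x: "x \<in> {x \<in> carrier (space M q). v q x = v q m}"
    define n where "n = add (space M q) x (a_inv (space M q) m)"
    have "n \<in> qkernel R M v q"
      unfolding qkernel_def n_def using x m v_simps by (simp add: R.r_neg)
    moreover have "add (space M q) n m = x" using x m unfolding n_def by (simp add: V.a_assoc V.l_neg)
    ultimately show "x \<in> qcls M (qkernel R M v) q m" unfolding qcls_def by force
  qed
qed

lemma some_qcls:
  assumes m: "m \<in> carrier (space M q)"
  shows "(SOME x. x \<in> qcls M (qkernel R M v) q m) \<in> carrier (space M q)"
    and "quot_value v q (qcls M (qkernel R M v) q m) = v q m"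
proof -
  have "m \<in> qcls M (qkernel R M v) q m" using m qcls_qkernel[OF m] by simp
  then have "(SOME x. x \<in> qcls M (qkernel R M v) q m) \<in> qcls M (qkernel R M v) q m" by (rule someI)
  then show "(SOME x. x \<in> qcls M (qkernel R M v) q m) \<in> carrier (space M q)"
    and "quot_value v q (qcls M (qkernel R M v) q m) = v q m"
    unfolding quot_value_def using qcls_qkernel[OF m] by simp_all
qed

lemma quot_carrier_some:
  assumes X: "X \<in> carrier (space (quot M (qkernel R M v)) q)"
  shows "(SOME x. x \<in> X) \<in> carrier (space M q)" and "X = qcls M (qkernel R M v) q (SOME x. x \<in> X)"
proof -
  obtain m where m: "m \<in> carrier (space M q)" "X = qcls M (qkernel R M v) q m"
    using X unfolding quot_def by auto
  show s: "(SOME x. x \<in> X) \<in> carrier (space M q)" using some_qcls(1)[OF m(1)] m(2) by simp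
  show "X = qcls M (qkernel R M v) q (SOME x. x \<in> X)"
    using qcls_qkernel[OF m(1)] qcls_qkernel[OF s] some_qcls(2)[OF m(1)] m(2)
    unfolding quot_value_def by simp
qed

lemma qcls_in_quot:
  "m \<in> carrier (space M q) \<Longrightarrow> qcls M (qkernel R M v) q m \<in> carrier (space (quot M (qkernel R M v)) q)"
  unfolding quot_def by simp

lemma quot_scalar_embedding: "scalar_embedding R (space (quot M (qkernel R M v)) q) (quot_value v q)"
proof -
  let ?N = "qkernel R M v"
  note some = quot_carrier_some
  interpret V: module R "space M q" by (rule qmodule_module[OF qm])
  show ?thesis
    unfolding scalar_embedding_def
  proof (intro conjI ballI)
    show "inj_on (quot_value v q) (carrier (space (quot M ?N) q))"
    proof (rule inj_onI)
      have cls: "X = {x \<in> carrier (space M q). v q x = quot_value v q X}"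
        if "X \<in> carrier (space (quot M ?N) q)" for X
        using some[OF that] qcls_qkernel[OF some(1)[OF that]] unfolding quot_value_def by simp
      fix X Y assume "X \<in> carrier (space (quot M ?N) q)" "Y \<in> carrier (space (quot M ?N) q)"
        and "quot_value v q X = quot_value v q Y"
      then show "X = Y" using cls by metis
    qed
    show "quot_value v q \<in> carrier (space (quot M ?N) q) \<rightarrow> carrier R"
      unfolding quot_value_def using some(1) qhom_dmod_carrier[OF cr vh] by blast
    have ez: "zero (space (quot M ?N) q) = qcls M ?N q (zero (space M q))" by (simp add: quot_def)
    show "zero (space (quot M ?N) q) \<in> carrier (space (quot M ?N) q)"
      unfolding ez by (rule qcls_in_quot) simp
    show "quot_value v q (zero (space (quot M ?N) q)) = zero R"
      unfolding ez some_qcls(2)[OF V.zero_closed] by (rule qhom_dmod_zero[OF cr qm vh])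
  next
    fix X Y assume X: "X \<in> carrier (space (quot M ?N) q)" and Y: "Y \<in> carrier (space (quot M ?N) q)"
    let ?w = "add (space M q) (SOME x. x \<in> X) (SOME x. x \<in> Y)"
    have w: "?w \<in> carrier (space M q)" using some(1)[OF X] some(1)[OF Y] by simp
    show "add (space (quot M ?N) q) X Y \<in> carrier (space (quot M ?N) q)"
      using qcls_in_quot[OF w] by (simp add: quot_def)
    show "quot_value v q (add (space (quot M ?N) q) X Y) = add R (quot_value v q X) (quot_value v q Y)"
      using some_qcls(2)[OF w] qhom_dmod_add[OF vh some(1)[OF X] some(1)[OF Y]]
      by (simp add: quot_def quot_value_def)
  next
    fix a X assume a: "a \<in> carrier R" and X: "X \<in> carrier (space (quot M ?N) q)"
    let ?w = "smult (space M q) a (SOME x. x \<in> X)"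
    have w: "?w \<in> carrier (space M q)" using some(1)[OF X] a by simp
    show "smult (space (quot M ?N) q) a X \<in> carrier (space (quot M ?N) q)"
      using qcls_in_quot[OF w] by (simp add: quot_def)
    show "quot_value v q (smult (space (quot M ?N) q) a X) = mult R a (quot_value v q X)"
      using some_qcls(2)[OF w] qhom_dmod_smult[OF vh a some(1)[OF X]]
      by (simp add: quot_def quot_value_def)
  qed
qed

lemma quot_dmod_embedding:
  assumes pg: "pogroup P" and dc: "down_closed P E"
  shows "dmod_embedding P R E (quot M (qkernel R M v)) (quot_value v)"
proof (rule dmod_embeddingI[OF cr pg dc quot_scalar_embedding])
  fix q X assume "X \<in> carrier (space (quot M (qkernel R M v)) q)" "q \<notin> E"
  then show "quot_value v q X = zero R"
    unfolding quot_value_def using quot_carrier_some(1) qhom_dmod_support[OF vh] by blast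
next
  fix q q' X assume X: "X \<in> carrier (space (quot M (qkernel R M v)) q)" and l: "qle P q q'"
  have w: "trans M q q' (SOME x. x \<in> X) \<in> carrier (space M q')"
    using qmodule_trans_closed[OF qm l quot_carrier_some(1)[OF X]] .
  have "trans (quot M (qkernel R M v)) q q' X = qcls M (qkernel R M v) q' (trans M q q' (SOME x. x \<in> X))"
    by (simp add: quot_def)
  then show "trans (quot M (qkernel R M v)) q q' X \<in> carrier (space (quot M (qkernel R M v)) q')
    \<and> quot_value v q' (trans (quot M (qkernel R M v)) q q' X)
        = (if q' \<in> E then quot_value v q X else zero R)"
    using qcls_in_quot[OF w] some_qcls(2)[OF w] qhom_dmod_trans[OF vh l quot_carrier_some(1)[OF X]]
    by (simp add: quot_value_def)
qed

end

context
  fixes P :: "'q::ab_group_add set" and R :: "('a, 'c) ring_scheme" and E :: "'q set"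
    and L :: "('q, 'a, 'w) qmod" and v :: "'q \<Rightarrow> 'w \<Rightarrow> 'a" and \<tau> :: "'q set"
  assumes cr: "cring R" and pg: "pogroup P" and dc: "down_closed P E" and L: "dmod_embedding P R E L v"
begin

private lemmas L_qmodule = dmod_embedding_qmodule[OF L] and L_qhom = dmod_embedding_qhom[OF L]

lemma Gamma_eq: "Gamma P L \<tau> q = {X \<in> carrier (space L q). q \<in> exit_region P E \<tau> \<or> v q X = zero R}"
proof -
  have "(\<forall>\<tau>'. face P \<tau>' \<and> \<not> \<tau>' \<subseteq> \<tau> \<longrightarrow> locmap L \<tau>' q X = zero (space (loc L \<tau>') q))
      \<longleftrightarrow> q \<in> exit_region P E \<tau> \<or> v q X = zero R" if X: "X \<in> carrier (space L q)" for X
  proof -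
    have e: "\<And>\<tau>'. face P \<tau>' \<Longrightarrow>
        locmap L \<tau>' q X = zero (space (loc L \<tau>') q) \<longleftrightarrow> v q X = zero R \<or> (\<exists>h\<in>\<tau>'. q + h \<notin> E)"
      by (rule locmap_eq_zero_iff[OF cr pg _ dc L X])
    show ?thesis unfolding exit_region_def by (simp add: e) blast
  qed
  then show ?thesis unfolding Gamma_def by auto
qed

text \<open>Gamma_tau is the kernel of the map to k[E] that forgets the degrees in the exit region.\<close>

lemma Gamma_qsubmodule: "qsubmodule P R L (Gamma P L \<tau>)"
proof -
  interpret R: cring R by (rule cr)
  let ?X = "exit_region P E \<tau>"
  define w where "w q X = (if q \<in> ?X then zero R else v q X)" for q X
  have "qhom P R L (dmod R (E - ?X)) w"
  proof (rule qhom_dmodI)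
    fix q q' X assume l: "qle P q q'" and X: "X \<in> carrier (space L q)"
    have "q \<in> ?X \<Longrightarrow> q' \<in> ?X" by (rule exit_region_mono[OF dc l])
    then show "w q' (trans L q q' X) = (if q' \<in> E - ?X then w q X else zero R)"
      unfolding w_def using qhom_dmod_trans[OF L_qhom l X] by auto
  qed (auto simp: w_def qhom_dmod_carrier[OF cr L_qhom] qhom_dmod_support[OF L_qhom]
      qhom_dmod_add[OF L_qhom] qhom_dmod_smult[OF L_qhom])
  moreover have "Gamma P L \<tau> = qkernel R L w"
    unfolding qkernel_def w_def Gamma_eq by auto
  ultimately show ?thesis using qkernel_qsubmodule[OF cr L_qmodule] by simp
qed

text \<open>A nonzero element moved up into the exit region stays nonzero and lands in Gamma_tau.\<close>

lemma Gamma_essential: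
  assumes escape: "\<forall>q\<in>E. \<exists>g\<in>E \<inter> exit_region P E \<tau>. qle P q g"
  shows "essential P R L (Gamma P L \<tau>)"
  unfolding essential_def
proof (intro conjI allI impI)
  show "qsubmodule P R L (Gamma P L \<tau>)" by (rule Gamma_qsubmodule)
next
  fix S assume S: "qsubmodule P R L S \<and> qnonzero L S"
  then obtain q X where X: "X \<in> S q" "X \<noteq> zero (space L q)" unfolding qnonzero_def by blast
  have Xc: "X \<in> carrier (space L q)" using S X unfolding qsubmodule_def by blast
  have nz: "v q X \<noteq> zero R"
    using X(2) dmod_embedding_eqI[OF L Xc qmodule_zero_closed[OF L_qmodule]]
      qhom_dmod_zero[OF cr L_qmodule L_qhom] by metis
  then have "q \<in> E" using qhom_dmod_support[OF L_qhom Xc] by blast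
  then obtain g where g: "g \<in> E" "g \<in> exit_region P E \<tau>" "qle P q g" using escape by blast
  define Y where "Y = trans L q g X"
  have Y: "Y \<in> carrier (space L g)" "v g Y = v q X"
    unfolding Y_def
    using qmodule_trans_closed[OF L_qmodule g(3) Xc] qhom_dmod_trans[OF L_qhom g(3) Xc] g(1) by auto
  have "Y \<in> S g" using S X(1) g(3) unfolding qsubmodule_def Y_def by blast
  moreover have "Y \<in> Gamma P L \<tau> g" using Y g(2) unfolding Gamma_eq by blast
  moreover have "Y \<noteq> zero (space L g)" using Y nz qhom_dmod_zero[OF cr L_qmodule L_qhom] by metis
  ultimately show "qnonzero L (\<lambda>q. S q \<inter> Gamma P L \<tau> q)" unfolding qnonzero_def by blast
qed

end

lemma quot_qkernel_coprimary:
  assumes cr: "cring R" and pg: "pogroup P" and qm: "qmodule P R M" and vh: "qhom P R M (dmod R E) v"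
    and fc: "face P \<tau>" and E: "coprimary_downset P \<tau> E"
  shows "coprimary P R (quot M (qkernel R M v))"
proof -
  have dc: "down_closed P E" and cl: "\<And>q f. q \<in> E \<Longrightarrow> f \<in> \<tau> \<Longrightarrow> q + f \<in> E"
    and escape: "\<forall>q\<in>E. \<exists>g\<in>E \<inter> exit_region P E \<tau>. qle P q g"
    using E unfolding coprimary_downset_def by blast+
  note Q = quot_dmod_embedding[OF cr qm vh pg dc]
  show ?thesis
    unfolding coprimary_def
    using fc locmap_inj_on[OF cr pg fc dc Q cl]
      Gamma_essential[OF cr pg dc loc_dmod_embedding[OF cr pg fc dc Q cl] escape]
    by blast
qed

section \<open>Primary decomposition\<close>

lemma qhom_dsum_dmod_component:
  assumes \<phi>: "qhom P R M (dsum J (\<lambda>j. dmod R (D j))) \<phi>" and j: "j \<in> J"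
  shows "qhom P R M (dmod R (D j)) (\<lambda>q m. \<phi> q m j)"
proof -
  have "\<phi> q m j \<in> carrier (space (dmod R (D j)) q)" if "m \<in> carrier (space M q)" for q m
  proof -
    have "\<phi> q \<in> carrier (space M q) \<rightarrow> carrier (space (dsum J (\<lambda>j. dmod R (D j))) q)"
      using \<phi> unfolding qhom_def linmap_def by blast
    then show ?thesis using that j by (auto simp: dsum_def)
  qed
  then show ?thesis using \<phi> j unfolding qhom_def linmap_def by (auto simp: dsum_def)
qed

definition dmod_restrict :: "'q set \<Rightarrow> ('a, 'c) ring_scheme \<Rightarrow> ('q \<Rightarrow> 'v \<Rightarrow> 'a) \<Rightarrow> 'q \<Rightarrow> 'v \<Rightarrow> 'a" where
  "dmod_restrict E R v q m = (if q \<in> E then v q m else zero R)"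

lemma qhom_dmod_restrict:
  assumes cr: "cring R" and v: "qhom P R M (dmod R D) v" and ED: "E \<subseteq> D" and dc: "down_closed P E"
  shows "qhom P R M (dmod R E) (dmod_restrict E R v)"
proof -
  interpret R: cring R by (rule cr)
  show ?thesis
  proof (rule qhom_dmodI)
    fix q q' m assume l: "qle P q q'" and m: "m \<in> carrier (space M q)"
    show "dmod_restrict E R v q' (trans M q q' m) = (if q' \<in> E then dmod_restrict E R v q m else zero R)"
      unfolding dmod_restrict_def using qhom_dmod_trans[OF v l m] ED down_closedD[OF dc l] by auto
  qed (simp_all add: dmod_restrict_def qhom_dmod_carrier[OF cr v]
      qhom_dmod_add[OF v] qhom_dmod_smult[OF v])
qed

lemma primary_decomposition_reindex:
  assumes fin: "finite I" and N: "\<forall>i\<in>I. qsubmodule P R M (N i) \<and> coprimary P R (quot M (N i))"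
    and inj: "\<forall>q. \<forall>m\<in>carrier (space M q). \<forall>m'\<in>carrier (space M q).
                (\<forall>i\<in>I. qcls M (N i) q m = qcls M (N i) q m') \<longrightarrow> m = m'"
  shows "\<exists>(r::nat) Ms. (\<forall>i<r. qsubmodule P R M (Ms i)) \<and> (\<forall>i<r. coprimary P R (quot M (Ms i)))
           \<and> (\<forall>q. inj_on (\<lambda>m. \<lambda>i\<in>{..<r}. qcls M (Ms i) q m) (carrier (space M q)))"
proof -
  obtain e where e: "bij_betw e {..<card I} I"
    using ex_bij_betw_nat_finite[OF fin] by (auto simp: atLeast0LessThan)
  have "inj_on (\<lambda>m. \<lambda>i\<in>{..<card I}. qcls M (N (e i)) q m) (carrier (space M q))" for q
  proof (rule inj_onI)
    fix m m' assume m: "m \<in> carrier (space M q)" and m': "m' \<in> carrier (space M q)"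
      and eq: "(\<lambda>i\<in>{..<card I}. qcls M (N (e i)) q m) = (\<lambda>i\<in>{..<card I}. qcls M (N (e i)) q m')"
    have "qcls M (N i) q m = qcls M (N i) q m'" if i: "i \<in> I" for i
    proof -
      obtain k where "k < card I" "e k = i" using bij_betw_imp_surj_on[OF e] i by force
      then show ?thesis using fun_cong[OF eq, of k] by simp
    qed
    then show "m = m'" using inj m m' by blast
  qed
  moreover have "e i \<in> I" if "i < card I" for i using bij_betwE[OF e] that by blast
  ultimately show ?thesis using N by (intro exI[of _ "card I"] exI[of _ "N \<circ> e"]) auto
qed

context
  fixes P :: "'q::ab_group_add set" and R :: "('a, 'c) ring_scheme" and M :: "('q, 'a, 'v) qmod"
    and J :: "'j set" and D :: "'j \<Rightarrow> 'q set" and \<phi> :: "'q \<Rightarrow> 'v \<Rightarrow> 'j \<Rightarrow> 'a"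
  assumes cr: "cring R" and pg: "pogroup P" and fin: "finite {\<sigma>. face P \<sigma>}" and qm: "qmodule P R M"
    and dc: "\<And>j. j \<in> J \<Longrightarrow> down_closed P (D j)"
    and \<phi>: "qhom P R M (dsum J (\<lambda>j. dmod R (D j))) \<phi>"
begin

abbreviation primary_component :: "'j \<Rightarrow> 'q set \<Rightarrow> 'q \<Rightarrow> 'v \<Rightarrow> 'a" where
  "primary_component j \<tau> \<equiv> dmod_restrict (primary_part P (D j) \<tau>) R (\<lambda>q m. \<phi> q m j)"

lemma qhom_primary_component:
  assumes j: "j \<in> J" and ft: "face P \<tau>"
  shows "qhom P R M (dmod R (primary_part P (D j) \<tau>)) (primary_component j \<tau>)"
  using qhom_dmod_restrict[OF cr qhom_dsum_dmod_component[OF \<phi> j]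
      primary_part_subset[OF pg fin dc[OF j]]]
    primary_part_coprimary[OF pg fin dc[OF j] ft] unfolding coprimary_downset_def by blast

lemma primary_components_coprimary:
  assumes j: "j \<in> J" and ft: "face P \<tau>"
  shows "coprimary P R (quot M (qkernel R M (primary_component j \<tau>)))"
  by (rule quot_qkernel_coprimary[OF cr pg qm qhom_primary_component[OF j ft] ft
        primary_part_coprimary[OF pg fin dc[OF j] ft]])

text \<open>Each point of D j lies in some primary part, so the primary components together
  recover every coordinate of the hull.\<close>

lemma primary_components_separate:
  assumes inj: "inj_on (\<phi> q) (carrier (space M q))"
    and m: "m \<in> carrier (space M q)" and m': "m' \<in> carrier (space M q)"
    and eq: "\<forall>j\<in>J. \<forall>\<tau>. face P \<tau> \<longrightarrow> qcls M (qkernel R M (primary_component j \<tau>)) q m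
                                          = qcls M (qkernel R M (primary_component j \<tau>)) q m'"
  shows "m = m'"
proof -
  have "\<phi> q m j = \<phi> q m' j" for j
  proof (cases "j \<in> J \<and> q \<in> D j")
    case True
    then obtain \<tau> where ft: "face P \<tau>" and q: "q \<in> primary_part P (D j) \<tau>"
      using primary_part_cover[OF pg fin dc] by blast
    note cls = qcls_qkernel[OF cr qm qhom_primary_component[OF _ ft]]
    have "m \<in> qcls M (qkernel R M (primary_component j \<tau>)) q m'"
      using eq True ft cls[OF _ m] m by auto
    then show ?thesis using cls[OF _ m'] True q by (simp add: dmod_restrict_def)
  next
    case False
    have "\<phi> q x j = (if j \<in> J then zero R else undefined)" if x: "x \<in> carrier (space M q)" for x
    proof -
      have "\<phi> q x \<in> carrier (space (dsum J (\<lambda>j. dmod R (D j))) q)"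
        using \<phi> x unfolding qhom_def linmap_def by blast
      then have \<phi>x: "\<phi> q x \<in> (\<Pi>\<^sub>E j\<in>J. carrier (space (dmod R (D j)) q))" by (simp add: dsum_def)
      show ?thesis
      proof (cases "j \<in> J")
        case True
        with \<phi>x have "\<phi> q x j \<in> carrier (space (dmod R (D j)) q)" by (rule PiE_mem)
        then show ?thesis using True False by (simp add: dmod_def)
      qed (simp add: PiE_arb[OF \<phi>x])
    qed
    then show ?thesis using m m' by simp
  qed
  then show "m = m'" using inj_onD[OF inj _ m m'] by blast
qed

end

theorem theorem5p8:
  fixes P :: "'q::ab_group_add set" and R :: "('a, 'c) ring_scheme" and M :: "('q, 'a, 'v) qmod"
  assumes "field R" and "polyhedral P" and "qmodule P R M" and "downset_finite P R M"
  shows "\<exists>(r::nat) Ms. (\<forall>i<r. qsubmodule P R M (Ms i))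
            \<and> (\<forall>i<r. coprimary P R (quot M (Ms i)))
            \<and> (\<forall>q. inj_on (\<lambda>m. \<lambda>i\<in>{..<r}. qcls M (Ms i) q m) (carrier (space M q)))"
proof -
  have cr: "cring R" using assms(1) unfolding field_def domain_def by blast
  have pg: "pogroup P" and fin: "finite {\<sigma>. face P \<sigma>}" using assms(2) unfolding polyhedral_def by auto
  obtain J :: "nat set" and D \<phi> where J: "finite J" and D: "\<forall>j\<in>J. downset P (D j)"
    and \<phi>: "qhom P R M (dsum J (\<lambda>j. dmod R (D j))) \<phi>" and inj: "\<forall>q. inj_on (\<phi> q) (carrier (space M q))"
    using assms(4) unfolding downset_finite_def by blast
  have dc: "\<And>j. j \<in> J \<Longrightarrow> down_closed P (D j)" using D downset_imp_down_closed by blast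
  let ?N = "\<lambda>(j, \<tau>). qkernel R M (primary_component P R D \<phi> j \<tau>)"
  show ?thesis
  proof (rule primary_decomposition_reindex[where I = "J \<times> {\<tau>. face P \<tau>}" and N = ?N])
    show "finite (J \<times> {\<tau>. face P \<tau>})" using J fin by simp
    show "\<forall>i\<in>J \<times> {\<tau>. face P \<tau>}. qsubmodule P R M (?N i) \<and> coprimary P R (quot M (?N i))"
      using qkernel_qsubmodule[OF cr assms(3) qhom_primary_component[OF cr pg fin assms(3) dc \<phi>]]
        primary_components_coprimary[OF cr pg fin assms(3) dc \<phi>] by auto
    show "\<forall>q. \<forall>m\<in>carrier (space M q). \<forall>m'\<in>carrier (space M q).
        (\<forall>i\<in>J \<times> {\<tau>. face P \<tau>}. qcls M (?N i) q m = qcls M (?N i) q m') \<longrightarrow> m = m'"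
      using primary_components_separate[OF cr pg fin assms(3) dc \<phi>] inj by auto
  qed
qed

end
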